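(* Let $P$ be a finite $(3+1)$-free poset, decomposed into clone sets $C_1,\dots,C_r$ and tangles $T_1,\dots,T_s$. Then there exists a listing $(X_1,\dots,X_{r+s})$ of the clone sets and tangles of $P$ such that for any two vertices $a\in X_i$ and $b\in X_j$ with $i\neq j$, we have $a<b$ exactly when (i) $\ell(a)\le\ell(b)-2$, or (ii) $\ell(a)=\ell(b)-1$ and $i<j$.
   Context: A poset $P$ is $(3+1)$-free if there are no $a,b,c,d\in P$ with $a<b<c$ and $d$ incomparable to each of $a,b,c$. For $a\in P$ let $D_a=\{x\in P:x<a\}$, $U_a=\{x\in P:x>a\}$. Write $a\mathrel{\top}b$ if neither of $D_a,D_b$ contains the other, $a\mathrel{\bot}b$ if neither of $U_a,U_b$ contains the other, and $a\approx b$ if $D_a=D_b$ and $U_a=U_b$. A top of a tangle is a subset $A\subseteq P$ with $|A|\ge2$ that is a connected component of the graph on $P$ with edges $\{a,b\}$ for $a\mathrel{\top}b$; a bottom of a tangle is defined in the same way using $\bot$. A top $A$ and bottom $B$ are matched if there are distinct $a_1,a_2\in A$, $b_1,b_2\in B$ with $b_1<a_1$, $b_2<a_2$ and the pairs $\{a_1,a_2\},\{b_1,b_2\},\{b_1,a_2\},\{b_2,a_1\}$ incomparable; in a $(3+1)$-free poset this is a perfect matching between tops and bottoms of tangles. A tangle is a matched pair $(A,B)$, identified with the set $A\cup B$. A clone set is an equivalence class of $\approx$ restricted to the vertices lying in no tangle. Levels: $L_1$ is the set of minimal elements of $P$, and $L_{k+1}$ is the set of minimal elements of $P\setminus(L_1\cup\dots\cup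 L_k)$; $\ell(a)$ denotes the index $k$ with $a\in L_k$. *)

theory Defs
  imports Main
begin

definition strict_poset :: "'a set \<Rightarrow> ('a \<Rightarrow> 'a \<Rightarrow> bool) \<Rightarrow> bool" where
  "strict_poset P lt \<longleftrightarrow>
     (\<forall>a\<in>P. \<not> lt a a) \<and>
     (\<forall>a\<in>P. \<forall>b\<in>P. \<forall>c\<in>P. lt a b \<and> lt b c \<longrightarrow> lt a c)"

definition incomp :: "('a \<Rightarrow> 'a \<Rightarrow> bool) \<Rightarrow> 'a \<Rightarrow> 'a \<Rightarrow> bool" where
  "incomp lt a b \<longleftrightarrow> a \<noteq> b \<and> \<not> lt a b \<and> \<not> lt b a"

definition free_3_1 :: "'a set \<Rightarrow> ('a \<Rightarrow> 'a \<Rightarrow> bool) \<Rightarrow> bool" where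
  "free_3_1 P lt \<longleftrightarrow>
     \<not> (\<exists>a\<in>P. \<exists>b\<in>P. \<exists>c\<in>P. \<exists>d\<in>P. lt a b \<and> lt b c \<and>
           incomp lt d a \<and> incomp lt d b \<and> incomp lt d c)"

definition down_set :: "'a set \<Rightarrow> ('a \<Rightarrow> 'a \<Rightarrow> bool) \<Rightarrow> 'a \<Rightarrow> 'a set" where
  "down_set P lt a = {x\<in>P. lt x a}"

definition up_set :: "'a set \<Rightarrow> ('a \<Rightarrow> 'a \<Rightarrow> bool) \<Rightarrow> 'a \<Rightarrow> 'a set" where
  "up_set P lt a = {x\<in>P. lt a x}"

definition top_rel :: "'a set \<Rightarrow> ('a \<Rightarrow> 'a \<Rightarrow> bool) \<Rightarrow> 'a \<Rightarrow> 'a \<Rightarrow> bool" where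
  "top_rel P lt a b \<longleftrightarrow>
     \<not> down_set P lt a \<subseteq> down_set P lt b \<and> \<not> down_set P lt b \<subseteq> down_set P lt a"

definition bot_rel :: "'a set \<Rightarrow> ('a \<Rightarrow> 'a \<Rightarrow> bool) \<Rightarrow> 'a \<Rightarrow> 'a \<Rightarrow> bool" where
  "bot_rel P lt a b \<longleftrightarrow>
     \<not> up_set P lt a \<subseteq> up_set P lt b \<and> \<not> up_set P lt b \<subseteq> up_set P lt a"

definition clone_rel :: "'a set \<Rightarrow> ('a \<Rightarrow> 'a \<Rightarrow> bool) \<Rightarrow> 'a \<Rightarrow> 'a \<Rightarrow> bool" where
  "clone_rel P lt a b \<longleftrightarrow> down_set P lt a = down_set P lt b \<and> up_set P lt a = up_set P lt b"

definition component :: "'a set \<Rightarrow> ('a \<Rightarrow> 'a \<Rightarrow> bool) \<Rightarrow> 'a \<Rightarrow> 'a set" where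
  "component P E a = {b\<in>P. (\<lambda>x y. x \<in> P \<and> y \<in> P \<and> E x y)\<^sup>*\<^sup>* a b}"

definition is_top :: "'a set \<Rightarrow> ('a \<Rightarrow> 'a \<Rightarrow> bool) \<Rightarrow> 'a set \<Rightarrow> bool" where
  "is_top P lt A \<longleftrightarrow> (\<exists>a\<in>P. A = component P (top_rel P lt) a) \<and> card A \<ge> 2"

definition is_bottom :: "'a set \<Rightarrow> ('a \<Rightarrow> 'a \<Rightarrow> bool) \<Rightarrow> 'a set \<Rightarrow> bool" where
  "is_bottom P lt B \<longleftrightarrow> (\<exists>a\<in>P. B = component P (bot_rel P lt) a) \<and> card B \<ge> 2"

definition matched :: "('a \<Rightarrow> 'a \<Rightarrow> bool) \<Rightarrow> 'a set \<Rightarrow> 'a set \<Rightarrow> bool" where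
  "matched lt A B \<longleftrightarrow>
     (\<exists>a1\<in>A. \<exists>a2\<in>A. \<exists>b1\<in>B. \<exists>b2\<in>B. a1 \<noteq> a2 \<and> b1 \<noteq> b2 \<and>
        lt b1 a1 \<and> lt b2 a2 \<and> incomp lt a1 a2 \<and> incomp lt b1 b2 \<and>
        incomp lt b1 a2 \<and> incomp lt b2 a1)"

definition is_tangle :: "'a set \<Rightarrow> ('a \<Rightarrow> 'a \<Rightarrow> bool) \<Rightarrow> 'a set \<Rightarrow> bool" where
  "is_tangle P lt T \<longleftrightarrow>
     (\<exists>A B. is_top P lt A \<and> is_bottom P lt B \<and> matched lt A B \<and> T = A \<union> B)"

definition in_tangle :: "'a set \<Rightarrow> ('a \<Rightarrow> 'a \<Rightarrow> bool) \<Rightarrow> 'a \<Rightarrow> bool" where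
  "in_tangle P lt x \<longleftrightarrow> (\<exists>T. is_tangle P lt T \<and> x \<in> T)"

definition is_clone_set :: "'a set \<Rightarrow> ('a \<Rightarrow> 'a \<Rightarrow> bool) \<Rightarrow> 'a set \<Rightarrow> bool" where
  "is_clone_set P lt C \<longleftrightarrow>
     (\<exists>a\<in>P. \<not> in_tangle P lt a \<and> C = {b\<in>P. \<not> in_tangle P lt b \<and> clone_rel P lt a b})"

text \<open>Levels: lev_union k = L_1 \<union> ... \<union> L_k, where L_(k+1) is the set of minimal elements
  of P minus (L_1 \<union> ... \<union> L_k).\<close>
fun lev_union :: "'a set \<Rightarrow> ('a \<Rightarrow> 'a \<Rightarrow> bool) \<Rightarrow> nat \<Rightarrow> 'a set" where
  "lev_union P lt 0 = {}"
| "lev_union P lt (Suc k) = lev_union P lt k \<union>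
     {a \<in> P - lev_union P lt k. \<not> (\<exists>x \<in> P - lev_union P lt k. lt x a)}"

definition level_set :: "'a set \<Rightarrow> ('a \<Rightarrow> 'a \<Rightarrow> bool) \<Rightarrow> nat \<Rightarrow> 'a set" where
  "level_set P lt k = lev_union P lt k - lev_union P lt (k - 1)"

definition lvl :: "'a set \<Rightarrow> ('a \<Rightarrow> 'a \<Rightarrow> bool) \<Rightarrow> 'a \<Rightarrow> nat" where
  "lvl P lt a = (THE k. k \<ge> 1 \<and> a \<in> level_set P lt k)"

end

theory Submission
  imports Defs "HOL-Library.List_Lexorder"
begin

text \<open>
  Elements whose levels differ by at least two are comparable, since otherwise a chain of
  lower covers would form a 3+1. So only consecutive levels matter, and there the poset is
  encoded by words: every element gets a word whose length is its level. A vertex of a tangle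
  top extends the word of a bottom vertex below it by the letter 0; any other element extends
  the largest word among its lower covers by a letter that decreases as its up-set grows.
  By induction on the level, elements of different parts (clone sets and tangles) on the same
  level have different words, and the smaller word has the larger up-set. Consequently, for
  \<open>a\<close> and \<open>b\<close> in different parts on consecutive levels, \<open>a < b\<close> holds exactly when the word of
  \<open>a\<close> is lexicographically smaller than that of \<open>b\<close>, and the same comparison can be made with
  the common word of the non-top elements of each part. Listing the parts by these words gives
  the required order.
\<close>

lemma less_append_singleton_iff_le:
  fixes p q :: "'a::linorder list"
  assumes "length p = length q"
  shows "p < q @ [c] \<longleftrightarrow> p \<le> q"
  using assms
proof (induction p arbitrary: q)
  case Nil then show ?case by simp
next
  case (Cons a p) then show ?case by (cases q) auto
qed

lemma append_singleton_less_iff: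
  fixes p q :: "'a::linorder list"
  assumes "length p = length q"
  shows "p @ [a] < q @ [b] \<longleftrightarrow> p < q \<or> (p = q \<and> a < b)"
  using assms
proof (induction p arbitrary: q)
  case Nil then show ?case by simp
next
  case (Cons x p) then show ?case by (cases q) auto
qed

lemma append_least_less_iff:
  fixes p q :: "'a::linorder list"
  assumes "\<And>x. c \<le> x" "q \<noteq> p" "q \<noteq> p @ [c]"
  shows "p @ [c] < q \<longleftrightarrow> p < q"
  using assms(2,3)
proof (induction p arbitrary: q)
  case Nil then show ?case using assms(1) by (cases q) (auto simp: neq_Nil_conv order_le_less)
next
  case (Cons x p) then show ?case by (cases q) auto
qed

text \<open>Compares words of elements on consecutive levels through the words of their parts;
  \<open>t\<close> and \<open>t'\<close> tell whether the element is a tangle top, whose word carries the extra letter \<open>c\<close>.\<close>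

lemma padded_less_iff:
  fixes p q :: "'a::linorder list"
  assumes least: "\<And>x. c \<le> x" and "p \<noteq> q"
    and len: "length q + (if t' then 1 else 0) = length p + (if t then 1 else 0) + 1"
    and "t \<Longrightarrow> t' \<Longrightarrow> q \<noteq> p @ [c]"
  shows "(if t then p @ [c] else p) < (if t' then q @ [c] else q) \<longleftrightarrow> p < q"
proof (cases t)
  case True
  then have "q \<noteq> p @ [c]" using assms(4) len by (cases t') auto
  then have "p @ [c] < q \<longleftrightarrow> p < q" using append_least_less_iff[OF least] assms(2) by metis
  moreover have "t' \<Longrightarrow> p @ [c] < q @ [c] \<longleftrightarrow> p @ [c] < q"
    using less_append_singleton_iff_le[of "p @ [c]" q c] len \<open>q \<noteq> p @ [c]\<close> True by auto
  ultimately show ?thesis using True by simp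
next
  case False
  then show ?thesis using less_append_singleton_iff_le[of p q c] len assms(2) by auto
qed

lemma exists_sorted_list_of_inj_on:
  fixes f :: "'a \<Rightarrow> 'b::linorder"
  assumes "finite S" "inj_on f S"
  obtains xs where "distinct xs" "set xs = S" "sorted_wrt (\<lambda>x y. f x < f y) xs"
proof -
  obtain xs0 where "distinct xs0" "set xs0 = S" using finite_distinct_list[OF assms(1)] by blast
  moreover define xs where "xs = sort_key f xs0"
  ultimately have "distinct xs" "set xs = S" "sorted (map f xs)" by (simp_all add: xs_def)
  moreover have "distinct (map f xs)" using calculation assms(2) by (simp add: distinct_map)
  ultimately show ?thesis using that strict_sorted_iff[of "map f xs"] by (simp add: sorted_wrt_map)
qed

lemma sorted_wrt_less_nth_iff:
  fixes f :: "'a \<Rightarrow> 'b::linorder"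
  assumes "sorted_wrt (\<lambda>x y. f x < f y) xs" "i < length xs" "j < length xs" "i \<noteq> j"
  shows "f (xs ! i) < f (xs ! j) \<longleftrightarrow> i < j"
  using sorted_wrt_nth_less[OF assms(1)] assms(2-4) by (metis less_asym linorder_neqE_nat)

locale free_3_1_poset =
  fixes P :: "'a set" and lt :: "'a \<Rightarrow> 'a \<Rightarrow> bool"
  assumes finite_P: "finite P" and strict_poset: "strict_poset P lt" and free_3_1: "free_3_1 P lt"
begin

lemma lt_irrefl: "x \<in> P \<Longrightarrow> \<not> lt x x"
  using strict_poset by (auto simp: strict_poset_def)

lemma lt_trans: "x \<in> P \<Longrightarrow> y \<in> P \<Longrightarrow> z \<in> P \<Longrightarrow> lt x y \<Longrightarrow> lt y z \<Longrightarrow> lt x z"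
  using strict_poset unfolding strict_poset_def by blast

lemma no_3_1:
  assumes "a \<in> P" "b \<in> P" "c \<in> P" "d \<in> P" "lt a b" "lt b c"
    "d \<noteq> a" "\<not> lt d a" "\<not> lt a d" "d \<noteq> b" "\<not> lt d b" "\<not> lt b d"
    "d \<noteq> c" "\<not> lt d c" "\<not> lt c d"
  shows False
  using free_3_1 assms unfolding free_3_1_def incomp_def by blast

lemma exists_minimal: "finite S \<Longrightarrow> S \<noteq> {} \<Longrightarrow> S \<subseteq> P \<Longrightarrow> \<exists>x\<in>S. \<forall>y\<in>S. \<not> lt y x"
proof (induction S rule: finite_ne_induct)
  case (singleton x) then show ?case using lt_irrefl by auto
next
  case (insert z F)
  then obtain m where m: "m \<in> F" "\<forall>y\<in>F. \<not> lt y m" by auto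
  show ?case
  proof (cases "lt z m")
    case True
    have "\<forall>y\<in>insert z F. \<not> lt y z"
      using True m insert.prems lt_irrefl lt_trans by (metis insert_iff insert_subset subsetD)
    then show ?thesis by auto
  next
    case False then show ?thesis using m by auto
  qed
qed

subsection \<open>Levels\<close>

abbreviation LU where "LU k \<equiv> lev_union P lt k"

lemma lev_union_subset: "LU k \<subseteq> P"
  by (induction k) auto

lemma lev_union_mono: "k \<le> k' \<Longrightarrow> LU k \<subseteq> LU k'"
  by (rule lift_Suc_mono_le[of LU]) auto

lemma lev_union_Suc_iff:
  "x \<in> LU (Suc k) \<longleftrightarrow> x \<in> LU k \<or> (x \<in> P - LU k \<and> (\<forall>y\<in>P - LU k. \<not> lt y x))"
  by auto

lemma lev_union_card: "k \<le> card (LU k) \<or> LU k = P"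
proof (induction k)
  case 0 then show ?case by simp
next
  case (Suc k)
  show ?case
  proof (cases "LU k = P")
    case True then show ?thesis using lev_union_subset[of "Suc k"] by auto
  next
    case False
    then have "P - LU k \<noteq> {}" using lev_union_subset[of k] by blast
    then obtain m where m: "m \<in> P - LU k" "\<forall>y\<in>P - LU k. \<not> lt y m"
      using exists_minimal finite_P by blast
    then have "LU k \<subset> LU (Suc k)" by auto
    then have "card (LU k) < card (LU (Suc k))"
      using psubset_card_mono finite_P lev_union_subset finite_subset by metis
    then show ?thesis using Suc False by simp
  qed
qed

lemma lev_union_eq_P: "LU (Suc (card P)) = P"
proof -
  have "card (LU (Suc (card P))) \<le> card P" using card_mono[OF finite_P lev_union_subset] .
  then show ?thesis using lev_union_card[of "Suc (card P)"] by linarith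
qed

definition level :: "'a \<Rightarrow> nat" where "level x = (LEAST k. x \<in> LU k)"

lemma mem_lev_union_level: "x \<in> P \<Longrightarrow> x \<in> LU (level x)"
  unfolding level_def using lev_union_eq_P by (metis LeastI)

lemma not_mem_lev_union_below_level: "k < level x \<Longrightarrow> x \<notin> LU k"
  unfolding level_def using not_less_Least by blast

lemma level_le: "x \<in> LU k \<Longrightarrow> level x \<le> k"
  unfolding level_def by (rule Least_le)

lemma level_ge_1: "x \<in> P \<Longrightarrow> 1 \<le> level x"
  using mem_lev_union_level[of x] by (cases "level x") auto

lemma lvl_eq_level: assumes "x \<in> P" shows "lvl P lt x = level x"
proof -
  have "k \<ge> 1 \<and> x \<in> level_set P lt k \<longleftrightarrow> k = level x" for k
  proof
    assume k: "k \<ge> 1 \<and> x \<in> level_set P lt k"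
    then have "x \<in> LU k" "x \<notin> LU (k - 1)" by (auto simp: level_set_def)
    then show "k = level x"
      using level_le[of x k] mem_lev_union_level[OF assms] lev_union_mono[of "level x" "k - 1"] k
      by fastforce
  next
    assume "k = level x"
    then show "k \<ge> 1 \<and> x \<in> level_set P lt k"
      using level_ge_1[OF assms] mem_lev_union_level[OF assms]
        not_mem_lev_union_below_level[of "k - 1" x]
      by (auto simp: level_set_def)
  qed
  then show ?thesis unfolding lvl_def by simp
qed

lemma level_less: assumes "x \<in> P" "y \<in> P" "lt x y" shows "level x < level y"
proof -
  obtain k where k: "level y = Suc k" using level_ge_1[OF assms(2)] by (cases "level y") auto
  have "y \<notin> LU k" using not_mem_lev_union_below_level k by simp
  then have "\<forall>z\<in>P - LU k. \<not> lt z y"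
    using mem_lev_union_level[OF assms(2)] k lev_union_Suc_iff by simp
  then have "x \<in> LU k" using assms by blast
  then show ?thesis using level_le k by fastforce
qed

lemma exists_lower_cover:
  assumes "y \<in> P" "2 \<le> level y" shows "\<exists>w\<in>P. lt w y \<and> level w + 1 = level y"
proof -
  obtain k where k: "level y = Suc (Suc k)" using assms(2) by (metis add_2_eq_Suc le_Suc_ex)
  have "y \<notin> LU (Suc k)" "y \<notin> LU k"
    by (rule not_mem_lev_union_below_level, simp add: k)+
  then have "\<not> (\<forall>z\<in>P - LU k. \<not> lt z y)" using assms(1) lev_union_Suc_iff[of y k] by blast
  then obtain w where w: "w \<in> P - LU k" "lt w y" by blast
  have "level w > k" using w mem_lev_union_level[of w] lev_union_mono[of "level w" k] by force
  moreover have "level w < level y" using level_less w assms(1) by blast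
  ultimately show ?thesis using w k by force
qed

lemma less_of_level_gap: assumes "x \<in> P" "y \<in> P" "level x + 2 \<le> level y" shows "lt x y"
  using assms
proof (induction "level y" arbitrary: y rule: less_induct)
  case less
  obtain w where w: "w \<in> P" "lt w y" "level w + 1 = level y"
    using exists_lower_cover less by fastforce
  show ?case
  proof (cases "level x + 2 \<le> level w")
    case True
    then have "lt x w" using less.hyps[of w] less.prems w by simp
    then show ?thesis using lt_trans less.prems w by blast
  next
    case False
    then have lx: "level x + 2 = level y" using less w by auto
    obtain v where v: "v \<in> P" "lt v w" "level v + 1 = level w"
      using exists_lower_cover[of w] w lx level_ge_1[OF less(2)] by force
    show ?thesis
    proof (rule ccontr)
      assume nxy: "\<not> lt x y"
      then have nxw: "\<not> lt x w" using lt_trans w less by blast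
      have "x \<noteq> v" using nxw v by blast
      show False
        apply (rule no_3_1[OF v(1) w(1) less(3) less(2) v(2) w(2)])
        using \<open>x \<noteq> v\<close> nxw nxy v w less lx
          level_less[of x v] level_less[of v x] level_less[of w x] level_less[of y x]
        by auto
    qed
  qed
qed

subsection \<open>The relations \<open>\<top>\<close> and \<open>\<bottom>\<close>\<close>

abbreviation up where "up x \<equiv> up_set P lt x"
abbreviation dn where "dn x \<equiv> down_set P lt x"
abbreviation TR where "TR x y \<equiv> top_rel P lt x y"
abbreviation BR where "BR x y \<equiv> bot_rel P lt x y"

definition top_vertex where "top_vertex x \<longleftrightarrow> x \<in> P \<and> (\<exists>y\<in>P. TR x y)"
definition bottom_vertex where "bottom_vertex x \<longleftrightarrow> x \<in> P \<and> (\<exists>y\<in>P. BR x y)"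

definition crossing where "crossing b a b' a' \<longleftrightarrow> b \<in> P \<and> a \<in> P \<and> b' \<in> P \<and> a' \<in> P \<and>
   lt b a \<and> lt b' a' \<and> \<not> lt b a' \<and> \<not> lt b' a"

lemma crossing_sym: "crossing b a b' a' \<Longrightarrow> crossing b' a' b a"
  by (auto simp: crossing_def)

lemma crossing_top_rel: "crossing b a b' a' \<Longrightarrow> TR a a'"
  by (auto simp: crossing_def top_rel_def down_set_def)

lemma crossing_bot_rel: "crossing b a b' a' \<Longrightarrow> BR b b'"
  by (auto simp: crossing_def bot_rel_def up_set_def)

lemma top_rel_crossing: "x \<in> P \<Longrightarrow> y \<in> P \<Longrightarrow> TR x y \<Longrightarrow> \<exists>b b'. crossing b x b' y"
  by (auto simp: crossing_def top_rel_def down_set_def)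

lemma bot_rel_crossing: "x \<in> P \<Longrightarrow> y \<in> P \<Longrightarrow> BR x y \<Longrightarrow> \<exists>a a'. crossing x a y a'"
  by (auto simp: crossing_def bot_rel_def up_set_def)

lemma crossing_vertices:
  "crossing b a b' a' \<Longrightarrow> top_vertex a \<and> top_vertex a' \<and> bottom_vertex b \<and> bottom_vertex b'"
  using crossing_top_rel crossing_bot_rel
  by (auto simp: crossing_def top_vertex_def bot_rel_def top_rel_def bottom_vertex_def) blast+

lemma top_rel_sym: "TR x y \<Longrightarrow> TR y x" by (auto simp: top_rel_def)
lemma bot_rel_sym: "BR x y \<Longrightarrow> BR y x" by (auto simp: bot_rel_def)

lemma top_rel_incomp: assumes "x \<in> P" "y \<in> P" "TR x y" shows "x \<noteq> y" "\<not> lt x y" "\<not> lt y x"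
proof -
  show "x \<noteq> y" using assms by (auto simp: top_rel_def)
  show "\<not> lt x y"
  proof
    assume "lt x y"
    then have "dn x \<subseteq> dn y" using lt_trans[of _ x y] assms unfolding down_set_def by blast
    then show False using assms by (auto simp: top_rel_def)
  qed
  show "\<not> lt y x"
  proof
    assume "lt y x"
    then have "dn y \<subseteq> dn x" using lt_trans[of _ y x] assms unfolding down_set_def by blast
    then show False using assms by (auto simp: top_rel_def)
  qed
qed

lemma bot_rel_incomp: assumes "x \<in> P" "y \<in> P" "BR x y" shows "x \<noteq> y" "\<not> lt x y" "\<not> lt y x"
proof -
  show "x \<noteq> y" using assms by (auto simp: bot_rel_def)
  show "\<not> lt x y"
  proof
    assume "lt x y"
    then have "up y \<subseteq> up x" using lt_trans[of x y] assms unfolding up_set_def by blast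
    then show False using assms by (auto simp: bot_rel_def)
  qed
  show "\<not> lt y x"
  proof
    assume "lt y x"
    then have "up x \<subseteq> up y" using lt_trans[of y x] assms unfolding up_set_def by blast
    then show False using assms by (auto simp: bot_rel_def)
  qed
qed

lemma top_rel_up_subset: assumes "x \<in> P" "y \<in> P" "TR x y" shows "up x \<subseteq> up y"
proof
  fix u assume "u \<in> up x"
  then have uP: "u \<in> P" and xu: "lt x u" by (auto simp: up_set_def)
  show "u \<in> up y"
  proof (rule ccontr)
    assume "u \<notin> up y"
    then have nyu: "\<not> lt y u" using uP by (auto simp: up_set_def)
    obtain b where b: "b \<in> P" "lt b x" "\<not> lt b y"
      using assms(3) by (auto simp: top_rel_def down_set_def)
    have inc: "\<not> lt y x" "\<not> lt x y" "x \<noteq> y" using top_rel_incomp[OF assms] by auto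
    show False
      apply (rule no_3_1[OF b(1) assms(1) uP assms(2) b(2) xu])
      using b inc nyu xu uP assms lt_trans[of y b x] lt_trans[of x u y] by auto
  qed
qed

lemma top_rel_up_eq: "x \<in> P \<Longrightarrow> y \<in> P \<Longrightarrow> TR x y \<Longrightarrow> up x = up y"
  using top_rel_up_subset top_rel_sym by blast

lemma bot_rel_dn_subset: assumes "x \<in> P" "y \<in> P" "BR x y" shows "dn x \<subseteq> dn y"
proof
  fix u assume "u \<in> dn x"
  then have uP: "u \<in> P" and ux: "lt u x" by (auto simp: down_set_def)
  show "u \<in> dn y"
  proof (rule ccontr)
    assume "u \<notin> dn y"
    then have nuy: "\<not> lt u y" using uP by (auto simp: down_set_def)
    obtain b where b: "b \<in> P" "lt x b" "\<not> lt y b"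
      using assms(3) by (auto simp: bot_rel_def up_set_def)
    have inc: "\<not> lt y x" "\<not> lt x y" "x \<noteq> y" using bot_rel_incomp[OF assms] by auto
    show False
      apply (rule no_3_1[OF uP assms(1) b(1) assms(2) ux b(2)])
      using b inc nuy ux uP assms lt_trans[of x b y] lt_trans[of y u x] by auto
  qed
qed

lemma bot_rel_dn_eq: "x \<in> P \<Longrightarrow> y \<in> P \<Longrightarrow> BR x y \<Longrightarrow> dn x = dn y"
  using bot_rel_dn_subset bot_rel_sym by blast

lemma dn_subset_of_level_less:
  assumes "x \<in> P" "y \<in> P" "level x < level y" shows "dn x \<subseteq> dn y"
  using assms level_less[of _ x] less_of_level_gap by (fastforce simp: down_set_def)

lemma up_subset_of_level_less:
  assumes "x \<in> P" "y \<in> P" "level x < level y" shows "up y \<subseteq> up x"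
  using assms level_less[of y] less_of_level_gap by (fastforce simp: up_set_def)

lemma top_rel_level_eq: "x \<in> P \<Longrightarrow> y \<in> P \<Longrightarrow> TR x y \<Longrightarrow> level x = level y"
  using dn_subset_of_level_less[of x y] dn_subset_of_level_less[of y x]
  by (metis linorder_neqE_nat top_rel_def)

lemma bot_rel_level_eq: "x \<in> P \<Longrightarrow> y \<in> P \<Longrightarrow> BR x y \<Longrightarrow> level x = level y"
  using up_subset_of_level_less[of x y] up_subset_of_level_less[of y x]
  by (metis linorder_neqE_nat bot_rel_def)

lemma level_le_of_dn_subset: assumes "x \<in> P" "y \<in> P" "dn x \<subseteq> dn y" shows "level x \<le> level y"
proof (cases "2 \<le> level x")
  case True
  then obtain w where "w \<in> P" "lt w x" "level w + 1 = level x"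
    using exists_lower_cover assms by blast
  then show ?thesis using assms level_less[of w y] by (auto simp: down_set_def)
next
  case False then show ?thesis using level_ge_1 assms by fastforce
qed

text \<open>A top vertex shares its up-set with its \<open>\<top>\<close>-neighbour and a bottom vertex its
  down-set with its \<open>\<bottom>\<close>-neighbour, so a vertex in both would make two of these
  neighbours both \<open>\<top>\<close>- and \<open>\<bottom>\<close>-related.\<close>

lemma not_top_and_bottom_vertex: "\<not> (top_vertex x \<and> bottom_vertex x)"
proof
  assume "top_vertex x \<and> bottom_vertex x"
  then obtain y z where yz: "x \<in> P" "y \<in> P" "z \<in> P" "TR x y" "BR x z"
    by (auto simp: top_vertex_def bottom_vertex_def)
  have "up x = up y" using top_rel_up_eq yz by blast
  have "dn x = dn z" using bot_rel_dn_eq yz by blast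
  have "TR z y" using yz \<open>dn x = dn z\<close> by (auto simp: top_rel_def)
  have "BR y z" using yz \<open>up x = up y\<close> by (auto simp: bot_rel_def)
  then have "dn y = dn z" using bot_rel_dn_eq yz by blast
  then show False using \<open>TR z y\<close> by (auto simp: top_rel_def)
qed

subsection \<open>Connectivity under \<open>\<top>\<close> and \<open>\<bottom>\<close>\<close>

abbreviation top_conn where "top_conn \<equiv> (\<lambda>x y. x \<in> P \<and> y \<in> P \<and> TR x y)\<^sup>*\<^sup>*"
abbreviation bot_conn where "bot_conn \<equiv> (\<lambda>x y. x \<in> P \<and> y \<in> P \<and> BR x y)\<^sup>*\<^sup>*"

lemma top_conn_sym: "top_conn a b \<Longrightarrow> top_conn b a"
  by (rule sympD[OF symp_rtranclp]) (auto intro: sympI top_rel_sym)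
lemma bot_conn_sym: "bot_conn a b \<Longrightarrow> bot_conn b a"
  by (rule sympD[OF symp_rtranclp]) (auto intro: sympI bot_rel_sym)
lemma top_conn_trans: "top_conn a b \<Longrightarrow> top_conn b c \<Longrightarrow> top_conn a c"
  by (rule rtranclp_trans)
lemma bot_conn_trans: "bot_conn a b \<Longrightarrow> bot_conn b c \<Longrightarrow> bot_conn a c"
  by (rule rtranclp_trans)
lemma top_conn_of_top_rel: "x \<in> P \<Longrightarrow> y \<in> P \<Longrightarrow> TR x y \<Longrightarrow> top_conn x y"
  by (rule r_into_rtranclp) simp
lemma bot_conn_of_bot_rel: "x \<in> P \<Longrightarrow> y \<in> P \<Longrightarrow> BR x y \<Longrightarrow> bot_conn x y"
  by (rule r_into_rtranclp) simp

lemma top_conn_up_eq: "top_conn x y \<Longrightarrow> x \<in> P \<Longrightarrow> up x = up y"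
  by (induction rule: rtranclp_induct) (auto dest: top_rel_up_eq)
lemma top_conn_level_eq: "top_conn x y \<Longrightarrow> x \<in> P \<Longrightarrow> level x = level y"
  by (induction rule: rtranclp_induct) (auto dest: top_rel_level_eq)
lemma bot_conn_dn_eq: "bot_conn x y \<Longrightarrow> x \<in> P \<Longrightarrow> dn x = dn y"
  by (induction rule: rtranclp_induct) (auto dest: bot_rel_dn_eq)
lemma bot_conn_level_eq: "bot_conn x y \<Longrightarrow> x \<in> P \<Longrightarrow> level x = level y"
  by (induction rule: rtranclp_induct) (auto dest: bot_rel_level_eq)
lemma top_conn_top_vertex: "top_conn x y \<Longrightarrow> top_vertex x \<Longrightarrow> top_vertex y"
  by (induction rule: rtranclp_induct) (auto simp: top_vertex_def dest: top_rel_sym)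
lemma bot_conn_bottom_vertex: "bot_conn x y \<Longrightarrow> bottom_vertex x \<Longrightarrow> bottom_vertex y"
  by (induction rule: rtranclp_induct) (auto simp: bottom_vertex_def dest: bot_rel_sym)

text \<open>These two lemmas make the matching between tops and bottoms of tangles one-to-one.\<close>

lemma crossings_same_top:
  assumes c1: "crossing b1 a b2 a2" and c2: "crossing c1 a c2 a3" shows "bot_conn b1 c1"
proof -
  have P: "b1 \<in> P" "b2 \<in> P" "c1 \<in> P" "c2 \<in> P"
    using c1 c2 by (auto simp: crossing_def)
  have f: "a \<in> up b1" "a2 \<notin> up b1" "a2 \<in> up b2" "a \<notin> up b2"
          "a \<in> up c1" "a3 \<notin> up c1" "a3 \<in> up c2" "a \<notin> up c2"
    using c1 c2 by (auto simp: crossing_def up_set_def)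
  have e: "bot_conn b1 b2" "bot_conn c1 c2"
    using bot_conn_of_bot_rel crossing_bot_rel c1 c2 P by auto
  show ?thesis
  proof (cases "up b2 \<subseteq> up c1")
    case False
    then have "BR b2 c1" using f by (auto simp: bot_rel_def)
    then show ?thesis using e P bot_conn_of_bot_rel bot_conn_trans by meson
  next
    case b2c1: True
    show ?thesis
    proof (cases "up b1 \<subseteq> up c1")
      case False
      then have "BR b1 c1" using f b2c1 by (auto simp: bot_rel_def)
      then show ?thesis using P bot_conn_of_bot_rel by blast
    next
      case b1c1: True
      have "\<not> up c2 \<subseteq> up b1" using b1c1 f by blast
      then have "BR b1 c2" using f by (auto simp: bot_rel_def)
      then show ?thesis using e P bot_conn_of_bot_rel bot_conn_sym bot_conn_trans by meson
    qed
  qed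
qed

lemma crossings_same_bottom:
  assumes c1: "crossing b a1 b2 a2" and c2: "crossing b a3 c2 a4" shows "top_conn a1 a3"
proof -
  have P: "a1 \<in> P" "a2 \<in> P" "a3 \<in> P" "a4 \<in> P"
    using c1 c2 by (auto simp: crossing_def)
  have f: "b \<in> dn a1" "b2 \<notin> dn a1" "b2 \<in> dn a2" "b \<notin> dn a2"
          "b \<in> dn a3" "c2 \<notin> dn a3" "c2 \<in> dn a4" "b \<notin> dn a4"
    using c1 c2 by (auto simp: crossing_def down_set_def)
  have e: "top_conn a1 a2" "top_conn a3 a4"
    using top_conn_of_top_rel crossing_top_rel c1 c2 P by auto
  show ?thesis
  proof (cases "dn a2 \<subseteq> dn a3")
    case False
    then have "TR a2 a3" using f by (auto simp: top_rel_def)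
    then show ?thesis using e P top_conn_of_top_rel top_conn_trans by meson
  next
    case a2a3: True
    show ?thesis
    proof (cases "dn a1 \<subseteq> dn a3")
      case False
      then have "TR a1 a3" using f a2a3 by (auto simp: top_rel_def)
      then show ?thesis using P top_conn_of_top_rel by blast
    next
      case a1a3: True
      have "\<not> dn a4 \<subseteq> dn a1" using a1a3 f by blast
      then have "TR a1 a4" using f by (auto simp: top_rel_def)
      then show ?thesis using e P top_conn_of_top_rel top_conn_sym top_conn_trans by meson
    qed
  qed
qed

lemma crossings_top_conn:
  assumes "top_conn a a'" "crossing b a c a2" "crossing b' a' c' a3" shows "bot_conn b b'"
  using assms
proof (induction arbitrary: b' c' a3 rule: rtranclp_induct)
  case base then show ?case using crossings_same_top by blast
next
  case (step y z)
  obtain d d' where d: "crossing d y d' z" using top_rel_crossing step(2) by blast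
  have "bot_conn b d" using step.IH d step.prems by blast
  moreover have "bot_conn d d'"
    using d crossing_bot_rel[OF d] bot_conn_of_bot_rel by (simp add: crossing_def)
  moreover have "bot_conn d' b'" using crossings_same_top[OF crossing_sym[OF d] step.prems(2)] .
  ultimately show ?case by (blast intro: bot_conn_trans)
qed

lemma crossings_bot_conn:
  assumes "bot_conn b b'" "crossing b a c a2" "crossing b' a' c' a3" shows "top_conn a a'"
  using assms
proof (induction arbitrary: a' c' a3 rule: rtranclp_induct)
  case base then show ?case using crossings_same_bottom by blast
next
  case (step y z)
  obtain d d' where d: "crossing y d z d'" using bot_rel_crossing step(2) by blast
  have "top_conn a d" using step.IH d step.prems by blast
  moreover have "top_conn d d'"
    using d crossing_top_rel[OF d] top_conn_of_top_rel by (simp add: crossing_def)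
  moreover have "top_conn d' a'" using crossings_same_bottom[OF crossing_sym[OF d] step.prems(2)] .
  ultimately show ?case by (blast intro: top_conn_trans)
qed

subsection \<open>Parts: tangles and clone sets\<close>

definition bottom_below where "bottom_below x = (SOME b. \<exists>b' a'. crossing b x b' a')"
definition top_above where "top_above x = (SOME a. \<exists>b' a'. crossing x a b' a')"
definition top_class where "top_class x = {y\<in>P. top_conn x y}"
definition bottom_class where "bottom_class x = {y\<in>P. bot_conn x y}"

text \<open>The tangle or clone set containing \<open>x\<close>; a tangle is reached from any of its vertices
  through a crossing instead of through the matching of tops and bottoms.\<close>

definition part where "part x =
  (if top_vertex x then top_class x \<union> bottom_class (bottom_below x)
   else if bottom_vertex x then top_class (top_above x) \<union> bottom_class x
   else {y\<in>P. \<not> top_vertex y \<and> \<not> bottom_vertex y \<and> clone_rel P lt x y})"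

lemma top_vertex_mem: "top_vertex x \<Longrightarrow> x \<in> P" by (simp add: top_vertex_def)
lemma bottom_vertex_mem: "bottom_vertex x \<Longrightarrow> x \<in> P" by (simp add: bottom_vertex_def)

lemma crossing_bottom_below: "top_vertex x \<Longrightarrow> \<exists>b' a'. crossing (bottom_below x) x b' a'"
proof -
  assume "top_vertex x"
  then obtain y where "x \<in> P" "y \<in> P" "TR x y" by (auto simp: top_vertex_def)
  then have "\<exists>b b' a'. crossing b x b' a'" using top_rel_crossing by blast
  then show ?thesis unfolding bottom_below_def by (rule someI_ex)
qed

lemma crossing_top_above: "bottom_vertex x \<Longrightarrow> \<exists>b' a'. crossing x (top_above x) b' a'"
proof -
  assume "bottom_vertex x"
  then obtain y where "x \<in> P" "y \<in> P" "BR x y" by (auto simp: bottom_vertex_def)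
  then have "\<exists>a b' a'. crossing x a b' a'" using bot_rel_crossing by blast
  then show ?thesis unfolding top_above_def by (rule someI_ex)
qed

lemma top_class_eq: "top_conn x y \<Longrightarrow> top_class x = top_class y"
  unfolding top_class_def using top_conn_sym top_conn_trans by blast
lemma bottom_class_eq: "bot_conn x y \<Longrightarrow> bottom_class x = bottom_class y"
  unfolding bottom_class_def using bot_conn_sym bot_conn_trans by blast

lemma part_subset: "part x \<subseteq> P"
  by (auto simp: part_def top_class_def bottom_class_def)

lemma mem_part: "x \<in> P \<Longrightarrow> x \<in> part x"
  by (auto simp: part_def top_class_def bottom_class_def clone_rel_def)

lemma crossing_part:
  assumes "crossing b a b' a'"
  shows "part a = top_class a \<union> bottom_class b" "part b = top_class a \<union> bottom_class b"
proof -
  have a: "top_vertex a" and b: "bottom_vertex b" "\<not> top_vertex b"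
    using crossing_vertices[OF assms] not_top_and_bottom_vertex by blast+
  obtain c c' where "crossing (bottom_below a) a c c'" using crossing_bottom_below a by blast
  then have "bot_conn (bottom_below a) b" using crossings_same_top assms by blast
  then show "part a = top_class a \<union> bottom_class b" using a bottom_class_eq by (simp add: part_def)
  obtain d d' where "crossing b (top_above b) d d'" using crossing_top_above b by blast
  then have "top_conn (top_above b) a" using crossings_same_bottom assms by blast
  then show "part b = top_class a \<union> bottom_class b" using b top_class_eq by (simp add: part_def)
qed

lemma crossing_part_eq: "crossing b a b' a' \<Longrightarrow> part b = part a"
  using crossing_part by simp

lemma part_crossing_eq:
  assumes c: "crossing b a b' a'" and y: "y \<in> top_class a \<union> bottom_class b"
  shows "part y = top_class a \<union> bottom_class b"
proof (cases "y \<in> top_class a")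
  case True
  then have "top_conn a y" "y \<in> P" by (simp_all add: top_class_def)
  then have "top_vertex y" using top_conn_top_vertex crossing_vertices c by blast
  then obtain c' a3 where cy: "crossing (bottom_below y) y c' a3"
    using crossing_bottom_below by blast
  then have "bot_conn b (bottom_below y)" using crossings_top_conn \<open>top_conn a y\<close> c by blast
  then show ?thesis using crossing_part(1)[OF cy] top_class_eq[OF \<open>top_conn a y\<close>] bottom_class_eq
    by simp
next
  case False
  then have "bot_conn b y" "y \<in> P" using y by (simp_all add: bottom_class_def)
  then have "bottom_vertex y" using bot_conn_bottom_vertex crossing_vertices c by blast
  then obtain c' a3 where cy: "crossing y (top_above y) c' a3" using crossing_top_above by blast
  then have "top_conn a (top_above y)" using crossings_bot_conn \<open>bot_conn b y\<close> c by blast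
  then show ?thesis using crossing_part(2)[OF cy] top_class_eq bottom_class_eq[OF \<open>bot_conn b y\<close>]
    by simp
qed

lemma part_eq: assumes "x \<in> P" "y \<in> part x" shows "part y = part x"
proof (cases "top_vertex x \<or> bottom_vertex x")
  case True
  then obtain b a b' a' where c: "crossing b a b' a'" "x = a \<or> x = b"
    using crossing_bottom_below crossing_top_above by blast
  then show ?thesis using crossing_part[OF c(1)] part_crossing_eq[OF c(1)] assms(2) by auto
next
  case False
  then show ?thesis using assms by (auto simp: part_def clone_rel_def)
qed

lemma part_top_rel: assumes "x \<in> P" "y \<in> P" "TR x y" shows "part x = part y"
proof -
  have "top_vertex x" using assms by (auto simp: top_vertex_def)
  then have "y \<in> part x"
    using top_conn_of_top_rel[OF assms] assms(2) by (simp add: part_def top_class_def)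
  then show ?thesis using part_eq[OF assms(1)] by simp
qed

lemma part_bot_rel: assumes "x \<in> P" "y \<in> P" "BR x y" shows "part x = part y"
proof -
  have "bottom_vertex x" "\<not> top_vertex x"
    using assms not_top_and_bottom_vertex by (auto simp: bottom_vertex_def)
  then have "y \<in> part x"
    using bot_conn_of_bot_rel[OF assms] assms(2) by (simp add: part_def bottom_class_def)
  then show ?thesis using part_eq[OF assms(1)] by simp
qed

lemma top_conn_part_eq: "top_conn x y \<Longrightarrow> x \<in> P \<Longrightarrow> part x = part y"
  by (induction rule: rtranclp_induct) (simp_all add: part_top_rel)

lemma bot_conn_part_eq: "bot_conn x y \<Longrightarrow> x \<in> P \<Longrightarrow> part x = part y"
  by (induction rule: rtranclp_induct) (simp_all add: part_bot_rel)

lemma part_top_vertices_top_conn: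
  assumes "part x = part y" "top_vertex x" "top_vertex y" shows "top_conn x y"
proof -
  obtain b b' a' where c: "crossing b x b' a'" using crossing_bottom_below assms(2) by blast
  have "y \<in> top_class x \<union> bottom_class b"
    using mem_part[OF top_vertex_mem[OF assms(3)]] assms(1) crossing_part(1)[OF c] by simp
  moreover have "y \<notin> bottom_class b"
    using bot_conn_bottom_vertex crossing_vertices[OF c] not_top_and_bottom_vertex assms(3)
    by (auto simp: bottom_class_def)
  ultimately show ?thesis by (simp add: top_class_def)
qed

lemma part_bottom_vertices_bot_conn:
  assumes "part x = part y" "bottom_vertex x" "bottom_vertex y" shows "bot_conn x y"
proof -
  obtain a b' a' where c: "crossing x a b' a'" using crossing_top_above assms(2) by blast
  have "y \<in> top_class a \<union> bottom_class x"
    using mem_part[OF bottom_vertex_mem[OF assms(3)]] assms(1) crossing_part(2)[OF c] by simp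
  moreover have "y \<notin> top_class a"
    using top_conn_top_vertex crossing_vertices[OF c] not_top_and_bottom_vertex assms(3)
    by (auto simp: top_class_def)
  ultimately show ?thesis by (simp add: bottom_class_def)
qed

lemma part_clone:
  assumes "x \<in> P" "\<not> top_vertex x" "\<not> bottom_vertex x" "part x = part y" "y \<in> P"
  shows "\<not> top_vertex y \<and> \<not> bottom_vertex y \<and> clone_rel P lt x y"
proof -
  have "y \<in> part x" using mem_part[OF assms(5)] assms(4) by simp
  then show ?thesis using assms(2,3) by (simp add: part_def)
qed

lemma crossing_level: assumes "crossing b a b' a'" shows "level b + 1 = level a"
proof -
  have P: "b \<in> P" "a \<in> P" "a' \<in> P" and "lt b a" "\<not> lt b a'"
    using assms by (simp_all add: crossing_def)
  then have "level b < level a" "\<not> level b + 2 \<le> level a'"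
    using level_less less_of_level_gap by blast+
  moreover have "level a = level a'" using top_rel_level_eq[OF P(2,3) crossing_top_rel[OF assms]] .
  ultimately show ?thesis by linarith
qed

lemma bottom_below_props:
  assumes "top_vertex x"
  shows "bottom_below x \<in> P" "lt (bottom_below x) x" "bottom_vertex (bottom_below x)"
    "part (bottom_below x) = part x" "level (bottom_below x) + 1 = level x"
  using crossing_bottom_below[OF assms] crossing_vertices crossing_part_eq crossing_level
  by (auto simp: crossing_def)

lemma top_vertex_bottoms:
  assumes "top_vertex a"
  shows "\<exists>b. bottom_vertex b \<and> part b = part a \<and> lt b a"
    "\<exists>b. bottom_vertex b \<and> part b = part a \<and> \<not> lt b a"
proof -
  obtain b b' a' where c: "crossing b a b' a'" using crossing_bottom_below assms by blast
  have "part b' = part a"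
    using crossing_part_eq[OF crossing_sym[OF c]] part_top_rel[of a a'] crossing_top_rel[OF c] c
    by (simp add: crossing_def)
  then show "\<exists>b. bottom_vertex b \<and> part b = part a \<and> lt b a"
    "\<exists>b. bottom_vertex b \<and> part b = part a \<and> \<not> lt b a"
    using c crossing_vertices[OF c] crossing_part_eq[OF c] unfolding crossing_def by blast+
qed

lemma bottom_vertex_tops:
  assumes "bottom_vertex b"
  shows "\<exists>a. top_vertex a \<and> part a = part b \<and> lt b a"
    "\<exists>a. top_vertex a \<and> part a = part b \<and> \<not> lt b a"
proof -
  obtain a b' a' where c: "crossing b a b' a'" using crossing_top_above assms by blast
  have "part a' = part b"
    using crossing_part_eq[OF c] part_top_rel[of a a'] crossing_top_rel[OF c] c
    by (simp add: crossing_def)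
  then show "\<exists>a. top_vertex a \<and> part a = part b \<and> lt b a"
    "\<exists>a. top_vertex a \<and> part a = part b \<and> \<not> lt b a"
    using c crossing_vertices[OF c] crossing_part_eq[OF c] unfolding crossing_def by metis+
qed

text \<open>Failing these two lemmas, the outside element would form a crossing with two vertices
  of the part.\<close>

lemma less_top_conn:
  assumes "top_conn y y'" "y \<in> P" "z \<in> P" "part z \<noteq> part y" "lt z y" shows "lt z y'"
  using assms(1)
proof (induction rule: rtranclp_induct)
  case base then show ?case using assms by simp
next
  case (step w w')
  show ?case
  proof (rule ccontr)
    assume "\<not> lt z w'"
    moreover obtain b where "b \<in> P" "lt b w'" "\<not> lt b w"
      using step(2) by (auto simp: top_rel_def down_set_def)
    ultimately have "crossing z w b w'" using step assms by (auto simp: crossing_def)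
    then show False using crossing_part_eq top_conn_part_eq[OF step(1) assms(2)] assms(4) by simp
  qed
qed

lemma bot_conn_less:
  assumes "bot_conn w w'" "w \<in> P" "y \<in> P" "part y \<noteq> part w" "lt w y" shows "lt w' y"
  using assms(1)
proof (induction rule: rtranclp_induct)
  case base then show ?case using assms by simp
next
  case (step v v')
  show ?case
  proof (rule ccontr)
    assume "\<not> lt v' y"
    moreover obtain a where "a \<in> P" "lt v' a" "\<not> lt v a"
      using step(2) by (auto simp: bot_rel_def up_set_def)
    ultimately have "crossing v y v' a" using step assms by (auto simp: crossing_def)
    then show False using crossing_part_eq bot_conn_part_eq[OF step(1) assms(2)] assms(4) by simp
  qed
qed

lemma up_nested:
  assumes "x \<in> P" "y \<in> P" "part x \<noteq> part y" shows "up x \<subseteq> up y \<or> up y \<subseteq> up x"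
  using part_bot_rel[OF assms(1,2)] assms(3) unfolding bot_rel_def by blast

lemma same_part_top_vertices:
  assumes "part x = part y" "top_vertex x" "top_vertex y"
  shows "level x = level y \<and> up x = up y"
proof -
  have "top_conn x y" using part_top_vertices_top_conn assms by blast
  then show ?thesis using top_conn_level_eq top_conn_up_eq top_vertex_mem[OF assms(2)] by blast
qed

lemma same_part_bottom_vertices:
  assumes "part x = part y" "bottom_vertex x" "bottom_vertex y"
  shows "level x = level y \<and> dn x = dn y"
proof -
  have "bot_conn x y" using part_bottom_vertices_bot_conn assms by blast
  then show ?thesis using bot_conn_level_eq bot_conn_dn_eq bottom_vertex_mem[OF assms(2)] by blast
qed

lemma same_part_top_bottom_level:
  assumes "part x = part y" "top_vertex x" "bottom_vertex y" shows "level x = level y + 1"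
proof -
  note b = bottom_below_props[OF assms(2)]
  have "part (bottom_below x) = part y" using b(4) assms(1) by simp
  then have "level (bottom_below x) = level y"
    using same_part_bottom_vertices b(3) assms(3) by blast
  then show ?thesis using b(5) by simp
qed

lemma same_part_same_level:
  assumes "x \<in> P" "y \<in> P" "part x = part y" "level x = level y"
  shows "(top_vertex x \<longleftrightarrow> top_vertex y) \<and> (bottom_vertex x \<longleftrightarrow> bottom_vertex y)"
proof -
  have "\<not> top_vertex x \<and> \<not> bottom_vertex x \<longleftrightarrow> \<not> top_vertex y \<and> \<not> bottom_vertex y"
    using part_clone[of x y] part_clone[of y x] assms by auto
  moreover have "\<not> (top_vertex x \<and> bottom_vertex y)"
    using same_part_top_bottom_level[of x y] assms(3,4) by auto
  moreover have "\<not> (top_vertex y \<and> bottom_vertex x)"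
    using same_part_top_bottom_level[of y x] assms(3,4) by auto
  ultimately show ?thesis using not_top_and_bottom_vertex by blast
qed

lemma same_part_level_less:
  assumes "x \<in> P" "y \<in> P" "part x = part y" "level x < level y"
  shows "top_vertex y \<and> bottom_vertex x"
proof -
  have "\<not> (top_vertex x \<and> top_vertex y)"
    using same_part_top_vertices[OF assms(3)] assms(4) by (metis less_irrefl)
  moreover have "\<not> (bottom_vertex x \<and> bottom_vertex y)"
    using same_part_bottom_vertices[OF assms(3)] assms(4) by (metis less_irrefl)
  moreover have "\<not> (top_vertex x \<and> bottom_vertex y)"
    using same_part_top_bottom_level[OF assms(3)] assms(4) by fastforce
  moreover have "top_vertex y \<or> bottom_vertex y"
  proof (rule ccontr)
    assume "\<not> (top_vertex y \<or> bottom_vertex y)"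
    then have "clone_rel P lt y x" using part_clone[of y x] assms(1-3) by simp
    then show False using level_le_of_dn_subset[of y x] assms by (simp add: clone_rel_def)
  qed
  moreover have "top_vertex x \<or> bottom_vertex x"
    using part_clone[of x y] assms(1-3) \<open>top_vertex y \<or> bottom_vertex y\<close> by blast
  ultimately show ?thesis using not_top_and_bottom_vertex by blast
qed

lemma same_part_same_level_less:
  assumes "x \<in> P" "w \<in> P" "y \<in> P" "part x = part w" "level x = level w" "lt w y"
    "part y \<noteq> part w"
  shows "lt x y"
proof -
  have kinds: "(top_vertex x \<longleftrightarrow> top_vertex w) \<and> (bottom_vertex x \<longleftrightarrow> bottom_vertex w)"
    using same_part_same_level[OF assms(1,2,4,5)] .
  show ?thesis
  proof (cases "bottom_vertex w")
    case True
    then have "bot_conn w x" using part_bottom_vertices_bot_conn[of w x] assms(4) kinds by simp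
    then show ?thesis using bot_conn_less[OF _ assms(2,3,7,6)] by blast
  next
    case False
    have "up x = up w"
    proof (cases "top_vertex w")
      case True
      then show ?thesis using same_part_top_vertices[of x w] assms(4) kinds by blast
    next
      case nt: False
      then have "clone_rel P lt w x" using part_clone[of w x] assms(1,2,4) False by simp
      then show ?thesis by (simp add: clone_rel_def)
    qed
    then show ?thesis using assms(3,6) by (auto simp: up_set_def)
  qed
qed

subsection \<open>Words\<close>

definition part_tops where "part_tops x = {y\<in>P. top_vertex y \<and> part y = part x}"
definition up_ext where "up_ext x = (if bottom_vertex x then up x \<union> part_tops x else up x)"
definition lower_covers where "lower_covers x = {w\<in>P. lt w x \<and> level w + 1 = level x}"

text \<open>The last letter of a non-top vertex decreases strictly as its up-set grows (see
  \<open>last_letter_anti\<close>); a bottom vertex counts the tops of its tangle into its up-set and gets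
  an odd letter, which keeps this strict when bottoms are compared with other vertices.\<close>

definition last_letter where "last_letter x =
  (if top_vertex x then 0
   else if bottom_vertex x then 2 * (card P - card (up_ext x)) + 1
   else 2 * (card P - card (up_ext x)))"

text \<open>The recursion is on the level: \<open>bottom_below x\<close> and the lower covers of \<open>x\<close> lie one
  level below \<open>x\<close>.\<close>

primrec word_rec :: "nat \<Rightarrow> 'a \<Rightarrow> nat list" where
  "word_rec 0 x = []"
| "word_rec (Suc j) x = (if top_vertex x then word_rec j (bottom_below x) @ [0]
     else (if j = 0 then [] else Max (word_rec j ` lower_covers x)) @ [last_letter x])"

definition word where "word x = word_rec (level x) x"

definition word_init where "word_init x =
  (if top_vertex x then word (bottom_below x)
   else if level x = 1 then [] else Max (word ` lower_covers x))"

lemma finite_lower_covers: "finite (lower_covers x)"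
  using finite_P by (simp add: lower_covers_def)

lemma lower_covers_nonempty: "x \<in> P \<Longrightarrow> 2 \<le> level x \<Longrightarrow> lower_covers x \<noteq> {}"
  using exists_lower_cover[of x] by (auto simp: lower_covers_def)

lemma word_eq: assumes "x \<in> P" shows "word x = word_init x @ [last_letter x]"
proof -
  obtain j where j: "level x = Suc j" using level_ge_1[OF assms] by (cases "level x") auto
  show ?thesis
  proof (cases "top_vertex x")
    case True
    have "level (bottom_below x) = j" using bottom_below_props(5)[OF True] j by simp
    then show ?thesis using True j by (simp add: word_def word_init_def last_letter_def)
  next
    case False
    have "word_rec j ` lower_covers x = word ` lower_covers x"
      by (rule image_cong) (auto simp: lower_covers_def word_def j)
    then show ?thesis using False j by (simp add: word_def word_init_def)
  qed
qed

lemma word_init_max: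
  assumes "x \<in> P" "\<not> top_vertex x" "2 \<le> level x"
  shows "\<exists>w\<in>lower_covers x. word_init x = word w" "\<And>w. w \<in> lower_covers x \<Longrightarrow> word w \<le> word_init x"
proof -
  have "word_init x = Max (word ` lower_covers x)" using assms by (simp add: word_init_def)
  moreover have "Max (word ` lower_covers x) \<in> word ` lower_covers x"
    using lower_covers_nonempty[OF assms(1,3)] finite_lower_covers by simp
  ultimately show "\<exists>w\<in>lower_covers x. word_init x = word w"
    "\<And>w. w \<in> lower_covers x \<Longrightarrow> word w \<le> word_init x"
    using finite_lower_covers by auto
qed

lemma length_word: "x \<in> P \<Longrightarrow> length (word x) = level x"
proof (induction "level x" arbitrary: x rule: less_induct)
  case less
  show ?case
  proof (cases "top_vertex x")
    case True
    note b = bottom_below_props[OF True]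
    have "length (word (bottom_below x)) = level (bottom_below x)" using less b(1,5) by simp
    then show ?thesis using word_eq[OF less(2)] True b(5) by (simp add: word_init_def)
  next
    case nt: False
    show ?thesis
    proof (cases "level x = 1")
      case True then show ?thesis using word_eq[OF less(2)] nt by (simp add: word_init_def)
    next
      case False
      then have "2 \<le> level x" using level_ge_1[OF less(2)] by simp
      then obtain w where w: "w \<in> lower_covers x" "word_init x = word w"
        using word_init_max(1)[OF less(2) nt] by blast
      have "length (word w) = level w" using less w by (simp add: lower_covers_def)
      then show ?thesis using word_eq[OF less(2)] w by (simp add: lower_covers_def)
    qed
  qed
qed

lemma length_word_init: "x \<in> P \<Longrightarrow> length (word_init x) + 1 = level x"
  using word_eq length_word by (metis length_append_singleton Suc_eq_plus1)

lemma last_letter_pos: assumes "x \<in> P" "\<not> top_vertex x" shows "1 \<le> last_letter x"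
proof -
  have "up_ext x \<subset> P"
    using assms lt_irrefl by (auto simp: up_ext_def up_set_def part_tops_def)
  then have "card (up_ext x) < card P" by (rule psubset_card_mono[OF finite_P])
  then show ?thesis using assms(2) by (auto simp: last_letter_def)
qed

lemma up_ext_bot_conn:
  assumes "bot_conn x y" "x \<in> P" "part x = part y"
  shows "up x \<union> part_tops x \<subseteq> up y \<union> part_tops y"
proof
  fix u assume u: "u \<in> up x \<union> part_tops x"
  show "u \<in> up y \<union> part_tops y"
  proof (cases "u \<in> part_tops x")
    case True then show ?thesis using assms(3) by (simp add: part_tops_def)
  next
    case False
    then have uu: "u \<in> P" "lt x u" using u by (auto simp: up_set_def)
    have "part u \<noteq> part x"
    proof
      assume pu: "part u = part x"
      then have "\<not> top_vertex u" using False uu by (simp add: part_tops_def)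
      then show False
        using same_part_level_less[OF assms(2) uu(1) pu[symmetric]] level_less uu assms(2)
        by blast
    qed
    then have "lt y u" using bot_conn_less[OF assms(1,2) uu(1)] uu by simp
    then show ?thesis using uu by (simp add: up_set_def)
  qed
qed

lemma word_eq_same_part:
  assumes "x \<in> P" "y \<in> P" "part x = part y" "\<not> top_vertex x" "\<not> top_vertex y"
  shows "word x = word y"
proof -
  have "dn x = dn y \<and> level x = level y \<and> up_ext x = up_ext y \<and> (bottom_vertex x \<longleftrightarrow> bottom_vertex y)"
  proof (cases "bottom_vertex x")
    case True
    then have yb: "bottom_vertex y" using part_clone[of y x] assms by auto
    have "bot_conn x y" "bot_conn y x"
      using part_bottom_vertices_bot_conn True by (simp_all add: assms(3) yb)
    then have "up x \<union> part_tops x = up y \<union> part_tops y"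
      using up_ext_bot_conn assms by blast
    then show ?thesis using same_part_bottom_vertices[OF assms(3) True yb] True yb
      by (simp add: up_ext_def)
  next
    case False
    then have "\<not> bottom_vertex y \<and> clone_rel P lt x y" using part_clone[of x y] assms by auto
    then show ?thesis using False level_le_of_dn_subset assms
      by (auto simp: clone_rel_def up_ext_def intro: antisym)
  qed
  then have "lower_covers x = lower_covers y" "last_letter x = last_letter y"
    using assms(4,5) by (auto simp: lower_covers_def down_set_def last_letter_def)
  then show ?thesis
    using \<open>dn x = dn y \<and> level x = level y \<and> _\<close> word_eq assms by (simp add: word_init_def)
qed

lemma part_tops_subset_up:
  assumes "bottom_vertex x" "y \<in> P" "part y \<noteq> part x" "a \<in> part_tops x" "lt y a"
  shows "part_tops x \<subseteq> up y"
proof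
  fix a' assume a': "a' \<in> part_tops x"
  have "top_conn a a'" using part_top_vertices_top_conn a' assms(4) by (simp add: part_tops_def)
  then have "lt y a'" using less_top_conn[of a a' y] assms by (simp add: part_tops_def)
  then show "a' \<in> up y" using a' by (simp add: up_set_def part_tops_def)
qed

lemma up_ext_subset_up:
  assumes "bottom_vertex x" "y \<in> P" "part y \<noteq> part x" "up x \<subseteq> up y"
  shows "up_ext x \<subseteq> up y"
proof -
  obtain a where a: "top_vertex a" "part a = part x" "lt x a"
    using bottom_vertex_tops(1)[OF assms(1)] by blast
  then have "lt y a" "a \<in> part_tops x"
    using assms(4) top_vertex_mem by (auto simp: up_set_def part_tops_def)
  then have "part_tops x \<subseteq> up y" using part_tops_subset_up[OF assms(1-3)] by blast
  then show ?thesis using assms(1,4) by (simp add: up_ext_def)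
qed

lemma last_letter_anti:
  assumes "x \<in> P" "y \<in> P" "\<not> top_vertex x" "\<not> top_vertex y" "part x \<noteq> part y" "up x \<subset> up y"
  shows "last_letter y < last_letter x"
proof -
  have fin: "finite (up_ext z)" for z
    using finite_subset[OF _ finite_P] by (auto simp: up_ext_def up_set_def part_tops_def)
  have card_le: "card (up_ext z) \<le> card P" for z
    using card_mono[OF finite_P] by (auto simp: up_ext_def up_set_def part_tops_def)
  show ?thesis
  proof (cases "bottom_vertex x")
    case True
    have sub: "up_ext x \<subseteq> up y" using up_ext_subset_up[OF True assms(2)] assms(5,6) by auto
    show ?thesis
    proof (cases "bottom_vertex y")
      case yb: True
      obtain a' where a': "top_vertex a'" "part a' = part y" "\<not> lt y a'"
        using bottom_vertex_tops(2)[OF yb] by blast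
      have "a' \<in> up_ext y" using a' yb top_vertex_mem by (simp add: up_ext_def part_tops_def)
      moreover have "a' \<notin> up_ext x"
        using a' assms True by (auto simp: up_ext_def part_tops_def up_set_def)
      ultimately have "up_ext x \<subset> up_ext y" using sub yb by (auto simp: up_ext_def)
      then have "card (up_ext x) < card (up_ext y)" using psubset_card_mono[OF fin] by blast
      then show ?thesis using True yb assms card_le[of y] by (simp add: last_letter_def)
    next
      case False
      then have "up_ext x \<subseteq> up_ext y" using sub by (simp add: up_ext_def)
      then have "card (up_ext x) \<le> card (up_ext y)" by (rule card_mono[OF fin])
      then show ?thesis using True False assms card_le[of y] by (simp add: last_letter_def)
    qed
  next
    case False
    have "up_ext x \<subset> up_ext y" using False assms by (auto simp: up_ext_def)
    then have "card (up_ext x) < card (up_ext y)" using psubset_card_mono[OF fin] by blast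
    moreover have "last_letter y \<le> 2 * (card P - card (up_ext y)) + 1"
      "last_letter x = 2 * (card P - card (up_ext x))"
      using False assms by (simp_all add: last_letter_def)
    ultimately show ?thesis using card_le[of y] by linarith
  qed
qed

text \<open>An element \<open>u\<close> above \<open>x'\<close> but not above \<open>x\<close> would complete the chain \<open>w < x' < u\<close>
  to a 3+1 with \<open>x\<close>.\<close>

lemma up_subset_of_lower_cover:
  assumes "x \<in> P" "x' \<in> P" "w \<in> P" "lt w x'" "level w + 1 = level x" "\<not> lt w x"
    "level x = level x'" "x \<noteq> x'"
  shows "up x' \<subseteq> up x"
proof
  fix u assume "u \<in> up x'"
  then have u: "u \<in> P" "lt x' u" by (auto simp: up_set_def)
  show "u \<in> up x"
  proof (cases "level x + 2 \<le> level u")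
    case True then show ?thesis using less_of_level_gap u assms by (simp add: up_set_def)
  next
    case False
    then have lu: "level u = level x + 1" using level_less u assms by fastforce
    show ?thesis
    proof (rule ccontr)
      assume "u \<notin> up x"
      then have nxu: "\<not> lt x u" using u by (simp add: up_set_def)
      show False
        apply (rule no_3_1[OF assms(3) assms(2) u(1) assms(1) assms(4) u(2)])
        using assms nxu lu level_less[of x w] level_less[of x x'] level_less[of x' x]
          level_less[of u x] u
        by auto
    qed
  qed
qed

subsection \<open>Words separate parts and order up-sets\<close>

definition word_invariant where "word_invariant j \<longleftrightarrow>
  (\<forall>x y. x \<in> P \<and> y \<in> P \<and> level x = j \<and> level y = j \<and> part x \<noteq> part y \<longrightarrow>
     word x \<noteq> word y \<and> (word x < word y \<longrightarrow> up y \<subseteq> up x))"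

lemma word_invariantD:
  assumes "word_invariant j" "x \<in> P" "y \<in> P" "level x = j" "level y = j" "part x \<noteq> part y"
  shows "word x \<noteq> word y" and "word x < word y \<Longrightarrow> up y \<subseteq> up x"
  using assms unfolding word_invariant_def by blast+

lemma word_invariant_0: "word_invariant 0"
  using level_ge_1 by (fastforce simp: word_invariant_def)

lemma less_top_vertex_iff_word:
  assumes I: "word_invariant j" and "a \<in> P" "top_vertex b" "level b = Suc j" "level a = j"
    "part a \<noteq> part b"
  shows "lt a b \<longleftrightarrow> word a < word (bottom_below b)"
proof -
  note bb = bottom_below_props[OF assms(3)]
  have lb: "level (bottom_below b) = j" using bb(5) assms(4) by simp
  have pa: "part a \<noteq> part (bottom_below b)" using bb(4) assms(6) by simp
  show ?thesis
  proof (cases "word a < word (bottom_below b)")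
    case True
    then have "up (bottom_below b) \<subseteq> up a"
      by (rule word_invariantD(2)[OF I assms(2) bb(1) assms(5) lb pa])
    then show ?thesis using True bb(2) assms(3) top_vertex_mem by (auto simp: up_set_def)
  next
    case False
    then have "word (bottom_below b) < word a"
      using word_invariantD(1)[OF I assms(2) bb(1) assms(5) lb pa] by simp
    then have sub: "up a \<subseteq> up (bottom_below b)"
      using word_invariantD(2)[OF I bb(1) assms(2) lb assms(5)] pa by simp
    obtain b' a' where c: "crossing (bottom_below b) b b' a'"
      using crossing_bottom_below[OF assms(3)] by blast
    have "\<not> lt a b"
    proof
      assume "lt a b"
      moreover have "top_conn b a'"
        using top_conn_of_top_rel crossing_top_rel[OF c] c by (simp add: crossing_def)
      ultimately have "lt a a'"
        using less_top_conn[of b a' a] assms(2,6) c by (simp add: crossing_def)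
      then show False using sub c assms(2) by (auto simp: up_set_def crossing_def)
    qed
    then show ?thesis using False by simp
  qed
qed

lemma less_iff_word_init:
  assumes I: "word_invariant j" and "x \<in> P" "y \<in> P" "level x = j" "level y = Suc j"
    "\<not> top_vertex y"
  shows "lt x y \<longleftrightarrow> word x \<le> word_init y"
proof
  have l2: "2 \<le> level y" using level_ge_1[OF assms(2)] assms(4,5) by simp
  {
    assume "lt x y"
    then have "x \<in> lower_covers y" using assms by (simp add: lower_covers_def)
    then show "word x \<le> word_init y" using word_init_max(2)[OF assms(3,6) l2] by simp
  next
    assume le: "word x \<le> word_init y"
    obtain w where w: "w \<in> lower_covers y" "word_init y = word w"
      using word_init_max(1)[OF assms(3,6) l2] by blast
    have wP: "w \<in> P" "lt w y" "level w = j" using w assms by (auto simp: lower_covers_def)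
    have pyw: "part y \<noteq> part w" using same_part_level_less[of w y] wP assms by auto
    show "lt x y"
    proof (cases "part x = part w")
      case True
      then show ?thesis using same_part_same_level_less[of x w y] wP assms pyw by simp
    next
      case False
      then have "word x < word w"
        using word_invariantD(1)[OF I assms(2) wP(1)] assms wP le w by auto
      then have "up w \<subseteq> up x" using word_invariantD(2)[OF I assms(2) wP(1)] assms wP False by simp
      then show ?thesis using wP assms by (auto simp: up_set_def)
    qed
  }
qed

lemma word_init_lower_cover:
  assumes "x \<in> P" "2 \<le> level x"
  obtains w where "w \<in> P" "lt w x" "level w + 1 = level x" "word w = word_init x"
proof (cases "top_vertex x")
  case True
  then show ?thesis using that bottom_below_props[OF True] by (simp add: word_init_def)
next
  case False
  then obtain w where "w \<in> lower_covers x" "word_init x = word w"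
    using word_init_max(1)[OF assms(1) _ assms(2)] by blast
  then show ?thesis using that by (auto simp: lower_covers_def)
qed

lemma word_init_less_up_subset:
  assumes I: "word_invariant j" and xP: "x \<in> P" and x'P: "x' \<in> P"
    and l: "level x = Suc j" "level x' = Suc j" and "part x \<noteq> part x'"
    and less: "word_init x < word_init x'"
  shows "up x' \<subseteq> up x"
proof -
  have "j \<noteq> 0" using less length_word_init[OF xP] length_word_init[OF x'P] l by auto
  then have l2: "2 \<le> level x" "2 \<le> level x'" using l by simp_all
  obtain w where "w \<in> P" "lt w x'" "level w + 1 = level x'" "word w = word_init x'"
    using word_init_lower_cover[OF x'P l2(2)] by blast
  then have w: "w \<in> P" "lt w x'" "level w = j" "word w = word_init x'" using l by simp_all
  have "\<not> lt w x"
  proof (cases "top_vertex x")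
    case True
    note bb = bottom_below_props[OF True]
    have wi: "word_init x = word (bottom_below x)" using True by (simp add: word_init_def)
    have "part w \<noteq> part x"
    proof
      assume pe: "part w = part x"
      then have "bottom_vertex w" using same_part_level_less[of w x] w xP l by simp
      then have "word w = word (bottom_below x)"
        using word_eq_same_part[of w "bottom_below x"] w bb pe not_top_and_bottom_vertex by metis
      then show False using less w wi by simp
    qed
    then show ?thesis using less_top_vertex_iff_word[OF I w(1) True] l w wi less by simp
  next
    case False
    show ?thesis
    proof
      assume "lt w x"
      then have "w \<in> lower_covers x" using w l by (simp add: lower_covers_def)
      then have "word w \<le> word_init x" using word_init_max(2)[OF xP False l2(1)] by blast
      then show False using less w by simp
    qed
  qed
  then show ?thesis
    using up_subset_of_lower_cover[OF xP x'P w(1,2)] w l \<open>part x \<noteq> part x'\<close> by auto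
qed

lemma last_letter_less_up_subset:
  assumes I: "word_invariant j" and xP: "x \<in> P" and x'P: "x' \<in> P"
    and l: "level x = Suc j" "level x' = Suc j" and pd: "part x \<noteq> part x'"
    and init: "word_init x = word_init x'" and less: "last_letter x < last_letter x'"
  shows "up x' \<subseteq> up x"
proof (cases "top_vertex x")
  case True
  note bb = bottom_below_props[OF True]
  have x'nt: "\<not> top_vertex x'" using less by (auto simp: last_letter_def)
  have "2 \<le> level x'" using bb(5) level_ge_1[OF bb(1)] l by simp
  then obtain w where w: "w \<in> lower_covers x'" "word_init x' = word w"
    using word_init_max(1)[OF x'P x'nt] by blast
  have wP: "w \<in> P" "lt w x'" "level w = j" using w l by (auto simp: lower_covers_def)
  have "part w = part (bottom_below x)"
    using word_invariantD(1)[OF I wP(1) bb(1) wP(3)] bb(5) l w init True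
    by (auto simp: word_init_def)
  then have pw: "part w = part x" using bb(4) by simp
  then have "bottom_vertex w" using same_part_level_less[of w x] wP xP l by simp
  moreover obtain b where b: "bottom_vertex b" "part b = part x" "\<not> lt b x"
    using top_vertex_bottoms(2)[OF True] by blast
  ultimately have "bot_conn w b" using part_bottom_vertices_bot_conn pw by simp
  then have "lt b x'" using bot_conn_less[of w b x'] wP x'P pw pd by simp
  moreover have "level b + 1 = level x" using same_part_top_bottom_level[of x b] b True by simp
  ultimately show ?thesis
    using up_subset_of_lower_cover[OF xP x'P bottom_vertex_mem[OF b(1)]] b l pd by auto
next
  case False
  have "\<not> top_vertex x'" using less by (auto simp: last_letter_def)
  show ?thesis
  proof (rule ccontr)
    assume "\<not> up x' \<subseteq> up x"
    then have "up x \<subset> up x'" using up_nested[OF xP x'P pd] by blast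
    then show False using last_letter_anti[OF xP x'P False \<open>\<not> top_vertex x'\<close> pd] less by simp
  qed
qed

lemma up_subset_of_word_less_Suc:
  assumes I: "word_invariant j" and xP: "x \<in> P" and x'P: "x' \<in> P"
    and l: "level x = Suc j" "level x' = Suc j" and pd: "part x \<noteq> part x'"
    and less: "word x < word x'"
  shows "up x' \<subseteq> up x"
proof -
  have "length (word_init x) = length (word_init x')"
    using length_word_init[OF xP] length_word_init[OF x'P] l by simp
  then have "word_init x < word_init x' \<or>
      (word_init x = word_init x' \<and> last_letter x < last_letter x')"
    using less word_eq[OF xP] word_eq[OF x'P] append_singleton_less_iff by metis
  then show ?thesis
    using word_init_less_up_subset[OF assms(1-6)] last_letter_less_up_subset[OF assms(1-6)] by blast
qed

lemma not_bottom_vertex_of_up_eq: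
  assumes "u \<in> P" "v \<in> P" "part u \<noteq> part v" "up u = up v"
  shows "\<not> bottom_vertex u"
proof
  assume ub: "bottom_vertex u"
  then have sub: "up_ext u \<subseteq> up u" using up_ext_subset_up[OF ub assms(2)] assms(3,4) by auto
  obtain a' where a': "top_vertex a'" "part a' = part u" "\<not> lt u a'"
    using bottom_vertex_tops(2)[OF ub] by blast
  then have "a' \<in> up_ext u" using ub top_vertex_mem by (simp add: up_ext_def part_tops_def)
  then show False using sub a' by (auto simp: up_set_def)
qed

lemma dn_eq_of_word_init_eq:
  assumes I: "word_invariant j" and xP: "x \<in> P" and x'P: "x' \<in> P"
    and l: "level x = Suc j" "level x' = Suc j" and nt: "\<not> top_vertex x" "\<not> top_vertex x'"
    and init: "word_init x = word_init x'"
  shows "dn x = dn x'"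
proof -
  have "lt z x \<longleftrightarrow> lt z x'" if zP: "z \<in> P" for z
  proof -
    consider "level z < j" | "level z = j" | "j < level z" by linarith
    then show ?thesis
    proof cases
      case 1 then show ?thesis
        using less_of_level_gap[OF zP xP] less_of_level_gap[OF zP x'P] l by simp
    next
      case 2
      then show ?thesis
        using less_iff_word_init[OF I zP xP 2 l(1) nt(1)]
          less_iff_word_init[OF I zP x'P 2 l(2) nt(2)] init
        by simp
    next
      case 3 then show ?thesis using level_less[OF zP xP] level_less[OF zP x'P] l by auto
    qed
  qed
  then show ?thesis by (auto simp: down_set_def)
qed

lemma word_neq_Suc:
  assumes I: "word_invariant j" and xP: "x \<in> P" and x'P: "x' \<in> P"
    and l: "level x = Suc j" "level x' = Suc j" and pd: "part x \<noteq> part x'"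
  shows "word x \<noteq> word x'"
proof
  assume "word x = word x'"
  then have init: "word_init x = word_init x'" and last: "last_letter x = last_letter x'"
    using word_eq[OF xP] word_eq[OF x'P] by simp_all
  consider "top_vertex x" "top_vertex x'" | "\<not> top_vertex x" "\<not> top_vertex x'"
    | "top_vertex x \<noteq> top_vertex x'" by blast
  then show False
  proof cases
    case 1
    note b = bottom_below_props[OF 1(1)] and b' = bottom_below_props[OF 1(2)]
    have "word (bottom_below x) \<noteq> word (bottom_below x')"
      using word_invariantD(1)[OF I b(1) b'(1)] b(4,5) b'(4,5) l pd by simp
    then show False using init 1 by (simp add: word_init_def)
  next
    case 2
    have "up x = up x'"
    proof (rule ccontr)
      assume "up x \<noteq> up x'"
      then consider "up x \<subset> up x'" | "up x' \<subset> up x" using up_nested[OF xP x'P pd] by blast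
      then show False
        using last_letter_anti[OF xP x'P 2 pd] last_letter_anti[OF x'P xP 2(2,1)] pd last
        by cases auto
    qed
    moreover have "\<not> bottom_vertex x" "\<not> bottom_vertex x'"
      using not_bottom_vertex_of_up_eq[OF xP x'P pd] not_bottom_vertex_of_up_eq[OF x'P xP] pd
        \<open>up x = up x'\<close> by auto
    moreover have "dn x = dn x'" using dn_eq_of_word_init_eq[OF I xP x'P l 2 init] .
    ultimately have "part x = part x'" using 2 x'P by (auto simp: part_def clone_rel_def)
    then show False using pd by simp
  next
    case 3
    then show False using last last_letter_pos[OF xP] last_letter_pos[OF x'P]
      by (auto simp: last_letter_def)
  qed
qed

lemma word_invariant: "word_invariant j"
proof (induction j)
  case 0 then show ?case by (rule word_invariant_0)
next
  case (Suc j)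
  then show ?case
    unfolding word_invariant_def[of "Suc j"] using word_neq_Suc up_subset_of_word_less_Suc by blast
qed

subsection \<open>Adjacent levels\<close>

lemma less_iff_word:
  assumes xP: "x \<in> P" and yP: "y \<in> P" and l: "level y = level x + 1" and pd: "part x \<noteq> part y"
  shows "lt x y \<longleftrightarrow> word x < word y"
proof (cases "top_vertex y")
  case True
  note b = bottom_below_props[OF True]
  have lb: "level (bottom_below y) = level x" using b(5) l by simp
  have "word y = word (bottom_below y) @ [0]"
    using word_eq[OF yP] True by (simp add: word_init_def last_letter_def)
  then have "word x < word y \<longleftrightarrow> word x \<le> word (bottom_below y)"
    using less_append_singleton_iff_le[of "word x" "word (bottom_below y)" 0]
      length_word[OF xP] length_word[OF b(1)] lb by simp
  moreover have "word x \<noteq> word (bottom_below y)"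
    using word_invariantD(1)[OF word_invariant xP b(1) refl lb] b(4) pd by simp
  moreover have "lt x y \<longleftrightarrow> word x < word (bottom_below y)"
    using less_top_vertex_iff_word[OF word_invariant xP True] l pd by simp
  ultimately show ?thesis by auto
next
  case False
  have "length (word_init y) = length (word x)"
    using length_word_init[OF yP] length_word[OF xP] l by simp
  then have "word x < word y \<longleftrightarrow> word x \<le> word_init y"
    using less_append_singleton_iff_le word_eq[OF yP] by metis
  moreover have "lt x y \<longleftrightarrow> word x \<le> word_init y"
    using less_iff_word_init[OF word_invariant xP yP] l False by simp
  ultimately show ?thesis by simp
qed

definition part_word where "part_word X = word (SOME x. x \<in> X \<and> \<not> top_vertex x)"

lemma part_word_part: assumes "x \<in> P" "\<not> top_vertex x" shows "part_word (part x) = word x"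
proof -
  define z where "z = (SOME z. z \<in> part x \<and> \<not> top_vertex z)"
  have "\<exists>z. z \<in> part x \<and> \<not> top_vertex z" using assms mem_part by blast
  then have "z \<in> part x \<and> \<not> top_vertex z" unfolding z_def by (rule someI_ex)
  then have z: "z \<in> part x" "\<not> top_vertex z" by simp_all
  have zP: "z \<in> P" using z(1) part_subset by blast
  have "word z = word x"
    using word_eq_same_part[OF zP assms(1) part_eq[OF assms(1) z(1)] z(2) assms(2)] .
  then show ?thesis by (simp add: part_word_def z_def)
qed

lemma non_top_representative:
  assumes "x \<in> P"
  obtains x0 where "x0 \<in> P" "\<not> top_vertex x0" "part x0 = part x"
    "level x0 + (if top_vertex x then 1 else 0) = level x"
    "word x = (if top_vertex x then word x0 @ [0] else word x0)"
proof (cases "top_vertex x")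
  case True
  note b = bottom_below_props[OF True]
  have "\<not> top_vertex (bottom_below x)" using b(3) not_top_and_bottom_vertex by blast
  moreover have "word x = word (bottom_below x) @ [0]"
    using word_eq[OF assms] True by (simp add: word_init_def last_letter_def)
  ultimately show ?thesis using that[OF b(1) _ b(4)] b(5) True by simp
next
  case False then show ?thesis using that assms by simp
qed

lemma part_word_inj:
  assumes "x \<in> P" "y \<in> P" "part x \<noteq> part y" shows "part_word (part x) \<noteq> part_word (part y)"
proof -
  obtain x0 where x0: "x0 \<in> P" "\<not> top_vertex x0" "part x0 = part x"
    using non_top_representative[OF assms(1)] by blast
  obtain y0 where y0: "y0 \<in> P" "\<not> top_vertex y0" "part y0 = part y"
    using non_top_representative[OF assms(2)] by blast
  have "word x0 \<noteq> word y0"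
  proof (cases "level x0 = level y0")
    case True
    then show ?thesis
      using word_invariantD(1)[OF word_invariant x0(1) y0(1) refl] x0(3) y0(3) assms(3)
      by simp
  next
    case False
    then show ?thesis using length_word[OF x0(1)] length_word[OF y0(1)] by metis
  qed
  then show ?thesis using part_word_part[OF x0(1,2)] part_word_part[OF y0(1,2)] x0(3) y0(3) by simp
qed

lemma less_iff_part_word:
  assumes xP: "x \<in> P" and yP: "y \<in> P" and l: "level y = level x + 1" and pd: "part x \<noteq> part y"
  shows "lt x y \<longleftrightarrow> part_word (part x) < part_word (part y)"
proof -
  obtain x0 where x0: "x0 \<in> P" "\<not> top_vertex x0" "part x0 = part x"
    "level x0 + (if top_vertex x then 1 else 0) = level x"
    "word x = (if top_vertex x then word x0 @ [0] else word x0)"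
    using non_top_representative[OF xP] by blast
  obtain y0 where y0: "y0 \<in> P" "\<not> top_vertex y0" "part y0 = part y"
    "level y0 + (if top_vertex y then 1 else 0) = level y"
    "word y = (if top_vertex y then word y0 @ [0] else word y0)"
    using non_top_representative[OF yP] by blast
  have "word y0 \<noteq> word x0 @ [0]" if "top_vertex x" "top_vertex y"
  proof -
    have "level y0 = level x" using x0(4) y0(4) l that by simp
    then have "word x \<noteq> word y0"
      using word_invariantD(1)[OF word_invariant xP y0(1)] y0(3) pd by simp
    then show ?thesis using x0(5) that by simp
  qed
  moreover have px: "part_word (part x) = word x0" using part_word_part[OF x0(1,2)] x0(3) by simp
  moreover have py: "part_word (part y) = word y0" using part_word_part[OF y0(1,2)] y0(3) by simp
  moreover have "word x0 \<noteq> word y0" using part_word_inj[OF xP yP pd] px py by simp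
  moreover have "length (word y0) + (if top_vertex y then 1 else 0) =
      length (word x0) + (if top_vertex x then 1 else 0) + 1"
    using x0(4) y0(4) l length_word[OF x0(1)] length_word[OF y0(1)] by simp
  ultimately have "word x < word y \<longleftrightarrow> word x0 < word y0"
    using padded_less_iff[where c = 0 and p = "word x0" and q = "word y0"
        and t = "top_vertex x" and t' = "top_vertex y"] x0(5) y0(5) by simp
  then show ?thesis using less_iff_word[OF assms] px py by simp
qed

subsection \<open>Parts are the clone sets and tangles\<close>

lemma component_top_rel: "component P (top_rel P lt) x = top_class x"
  by (simp add: component_def top_class_def)
lemma component_bot_rel: "component P (bot_rel P lt) x = bottom_class x"
  by (simp add: component_def bottom_class_def)

lemma card_ge_2_of_mem: "finite A \<Longrightarrow> a \<in> A \<Longrightarrow> b \<in> A \<Longrightarrow> a \<noteq> b \<Longrightarrow> 2 \<le> card A"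
  using card_mono[of A "{a, b}"] by simp

lemma is_tangle_part: assumes "top_vertex x" shows "is_tangle P lt (part x)"
proof -
  obtain b' a' where c: "crossing (bottom_below x) x b' a'"
    using crossing_bottom_below assms by blast
  define b where "b = bottom_below x"
  have P: "x \<in> P" "a' \<in> P" "b \<in> P" "b' \<in> P" using c by (simp_all add: crossing_def b_def)
  have tr: "TR x a'" and br: "BR b b'"
    using crossing_top_rel[OF c] crossing_bot_rel[OF c] b_def by simp_all
  have inc: "incomp lt x a'" "incomp lt b b'"
    using top_rel_incomp[OF P(1,2) tr] bot_rel_incomp[OF P(3,4) br] by (simp_all add: incomp_def)
  have cl: "lt b x" "lt b' a'" "\<not> lt b a'" "\<not> lt b' x" using c by (simp_all add: crossing_def b_def)
  have "\<not> lt a' b" using lt_trans[of a' b x] P cl inc by (auto simp: incomp_def)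
  moreover have "\<not> lt x b'" using lt_trans[of x b' a'] P cl inc by (auto simp: incomp_def)
  ultimately have inc': "incomp lt b a'" "incomp lt b' x" using cl inc by (auto simp: incomp_def)
  have mem: "x \<in> top_class x" "a' \<in> top_class x" "b \<in> bottom_class b" "b' \<in> bottom_class b"
    using P top_conn_of_top_rel[OF P(1,2) tr] bot_conn_of_bot_rel[OF P(3,4) br]
    by (simp_all add: top_class_def bottom_class_def)
  have "x \<noteq> a'" "b \<noteq> b'" using inc by (simp_all add: incomp_def)
  then have "matched lt (top_class x) (bottom_class b)"
    unfolding matched_def using mem inc inc' cl(1,2) by blast
  moreover have "is_top P lt (top_class x)"
    using card_ge_2_of_mem[OF _ mem(1,2) \<open>x \<noteq> a'\<close>] finite_P P(1)
    unfolding is_top_def component_top_rel by (auto simp: top_class_def)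
  moreover have "is_bottom P lt (bottom_class b)"
    using card_ge_2_of_mem[OF _ mem(3,4) \<open>b \<noteq> b'\<close>] finite_P P(3)
    unfolding is_bottom_def component_bot_rel by (auto simp: bottom_class_def)
  moreover have "part x = top_class x \<union> bottom_class b" using assms by (simp add: part_def b_def)
  ultimately show ?thesis unfolding is_tangle_def by blast
qed

lemma is_tangle_imp_part: assumes "is_tangle P lt T" obtains x where "top_vertex x" "T = part x"
proof -
  obtain A B where AB: "is_top P lt A" "is_bottom P lt B" "matched lt A B" "T = A \<union> B"
    using assms by (auto simp: is_tangle_def)
  obtain a where a: "a \<in> P" "A = top_class a"
    using AB(1) by (auto simp: is_top_def component_top_rel)
  obtain b where b: "b \<in> P" "B = bottom_class b"
    using AB(2) by (auto simp: is_bottom_def component_bot_rel)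
  obtain a1 a2 b1 b2 where m: "a1 \<in> A" "a2 \<in> A" "b1 \<in> B" "b2 \<in> B" "lt b1 a1" "lt b2 a2"
    "\<not> lt b1 a2" "\<not> lt b2 a1" using AB(3) unfolding matched_def incomp_def by blast
  have c: "crossing b1 a1 b2 a2"
    using m a b by (auto simp: crossing_def top_class_def bottom_class_def)
  have "A = top_class a1" using m a top_class_eq by (simp add: top_class_def)
  moreover have "B = bottom_class b1" using m b bottom_class_eq by (simp add: bottom_class_def)
  ultimately have "T = part a1" using crossing_part(1)[OF c] AB(4) by simp
  then show ?thesis using that crossing_vertices[OF c] by blast
qed

lemma in_tangle_iff: assumes "x \<in> P" shows "in_tangle P lt x \<longleftrightarrow> top_vertex x \<or> bottom_vertex x"
proof
  assume "in_tangle P lt x"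
  then obtain T where T: "is_tangle P lt T" "x \<in> T" by (auto simp: in_tangle_def)
  then obtain y where y: "top_vertex y" "T = part y" using is_tangle_imp_part by metis
  have "part x = part y" using part_eq[OF top_vertex_mem[OF y(1)]] T y by simp
  then show "top_vertex x \<or> bottom_vertex x" using part_clone[of x y] y assms top_vertex_mem by auto
next
  assume "top_vertex x \<or> bottom_vertex x"
  then obtain a b b' a' where c: "crossing b a b' a'" "x = a \<or> x = b"
    using crossing_bottom_below crossing_top_above by blast
  then have "x \<in> part a" using crossing_part_eq[OF c(1)] mem_part assms by metis
  then show "in_tangle P lt x"
    using is_tangle_part crossing_vertices[OF c(1)] by (auto simp: in_tangle_def)
qed

lemma clone_part:
  assumes "x \<in> P" "\<not> in_tangle P lt x"
  shows "part x = {y\<in>P. \<not> in_tangle P lt y \<and> clone_rel P lt x y}"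
  using assms in_tangle_iff by (auto simp: part_def)

lemma clone_sets_and_tangles: "{X. is_clone_set P lt X \<or> is_tangle P lt X} = part ` P"
proof (intro equalityI subsetI)
  fix X assume "X \<in> {X. is_clone_set P lt X \<or> is_tangle P lt X}"
  then consider "is_clone_set P lt X" | "is_tangle P lt X" by blast
  then show "X \<in> part ` P"
  proof cases
    case 1 then show ?thesis using clone_part by (auto simp: is_clone_set_def)
  next
    case 2 then show ?thesis using is_tangle_imp_part top_vertex_mem by (metis image_eqI)
  qed
next
  fix X assume "X \<in> part ` P"
  then obtain x where x: "x \<in> P" "X = part x" by blast
  show "X \<in> {X. is_clone_set P lt X \<or> is_tangle P lt X}"
  proof (cases "in_tangle P lt x")
    case True
    then obtain T where T: "is_tangle P lt T" "x \<in> T" by (auto simp: in_tangle_def)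
    then obtain y where y: "top_vertex y" "T = part y" using is_tangle_imp_part by metis
    then have "part x = part y" using part_eq[OF top_vertex_mem[OF y(1)]] T by simp
    then show ?thesis using T y x by simp
  next
    case False
    then show ?thesis using x clone_part by (auto simp: is_clone_set_def)
  qed
qed

lemma less_iff_level_part_word:
  assumes "x \<in> P" "y \<in> P" "part x \<noteq> part y"
  shows "lt x y \<longleftrightarrow> level x + 2 \<le> level y \<or>
    (level x + 1 = level y \<and> part_word (part x) < part_word (part y))"
proof -
  consider "level x + 2 \<le> level y" | "level x + 1 = level y" | "level y \<le> level x" by linarith
  then show ?thesis
  proof cases
    case 1 then show ?thesis using less_of_level_gap assms by simp
  next
    case 2 then show ?thesis using less_iff_part_word assms by simp
  next
    case 3 then show ?thesis using level_less[OF assms(1,2)] by auto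
  qed
qed

end

theorem theorem3p3:
  fixes P :: "'a set" and lt :: "'a \<Rightarrow> 'a \<Rightarrow> bool"
  assumes "finite P" and "strict_poset P lt" and "free_3_1 P lt"
  shows "\<exists>Xs :: 'a set list. distinct Xs \<and>
           set Xs = {X. is_clone_set P lt X \<or> is_tangle P lt X} \<and>
           (\<forall>i j a b. i < length Xs \<longrightarrow> j < length Xs \<longrightarrow> i \<noteq> j \<longrightarrow>
              a \<in> Xs ! i \<longrightarrow> b \<in> Xs ! j \<longrightarrow>
              (lt a b \<longleftrightarrow> (lvl P lt a + 2 \<le> lvl P lt b \<or>
                           (lvl P lt a + 1 = lvl P lt b \<and> i < j))))"
proof -
  interpret free_3_1_poset P lt using assms by unfold_locales
  have "inj_on part_word (part ` P)" using part_word_inj by (auto simp: inj_on_def)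
  then obtain Xs where Xs: "distinct Xs" "set Xs = part ` P"
    "sorted_wrt (\<lambda>X Y. part_word X < part_word Y) Xs"
    using exists_sorted_list_of_inj_on[OF finite_imageI[OF finite_P]] by blast
  have part_nth: "a \<in> P" "Xs ! i = part a" if i: "i < length Xs" and a: "a \<in> Xs ! i" for i a
  proof -
    obtain x where "x \<in> P" "Xs ! i = part x" using nth_mem[OF i] Xs(2) by auto
    then show "a \<in> P" "Xs ! i = part a" using part_subset part_eq a by auto
  qed
  have "lt a b \<longleftrightarrow> lvl P lt a + 2 \<le> lvl P lt b \<or> (lvl P lt a + 1 = lvl P lt b \<and> i < j)"
    if ij: "i < length Xs" "j < length Xs" "i \<noteq> j" and "a \<in> Xs ! i" "b \<in> Xs ! j" for i j a b
  proof -
    have ab: "a \<in> P" "b \<in> P" "Xs ! i = part a" "Xs ! j = part b" using part_nth that by blast+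
    then have "part a \<noteq> part b" using Xs(1) ij nth_eq_iff_index_eq by metis
    then show ?thesis
      using less_iff_level_part_word[OF ab(1,2)] sorted_wrt_less_nth_iff[OF Xs(3) ij] ab
        lvl_eq_level[OF ab(1)] lvl_eq_level[OF ab(2)] by simp
  qed
  moreover have "set Xs = {X. is_clone_set P lt X \<or> is_tangle P lt X}"
    using Xs(2) clone_sets_and_tangles by simp
  ultimately show ?thesis using Xs(1) by blast
qed

end
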